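(* Let $\mathcal{G}=(V,\mathcal{E})$ be a plurigraph with $V=[n]$. Then $$Y_{\mathcal{G}}=\sum_{A\subseteq\mathcal{E}}(-1)^{|A|}p_{\pi(A)},$$ where the sum is over all sub-multisets $A$ of $\mathcal{E}$ (the elements of $\mathcal{E}$ being regarded as distinct, so there are $2^{|\mathcal{E}|}$ terms).
   Context: Work over a field $\mathbb{K}$ of characteristic zero with noncommuting variables $y_1,y_2,\dots$, $\mathbb{P}=\{1,2,\dots\}$. A graph $(V,E)$ has $E$ a finite multiset of unordered pairs of (not necessarily distinct) vertices. A plurigraph is $\mathcal{G}=(V,\mathcal{E})$ with $\mathcal{E}$ a finite multiset of graphs $(V,E)$ on vertex set $V$ with $E\ne\emptyset$. A proper coloring is $f:V\to\mathbb{P}$ such that each $(V,E)\in\mathcal{E}$ has an edge $uv\in E$ with $f(u)\ne f(v)$; $Y_{\mathcal{G}}=\sum_f y_{f(1)}\cdots y_{f(n)}$ over proper colorings. For a set partition $\pi$ of $[n]$, $m_\pi=\sum y_{i_1}\cdots y_{i_n}$ over sequences $(i_1,\dots,i_n)\in\mathbb{P}^n$ with $i_j=i_k$ iff $j,k$ lie in the same block of $\pi$, and $p_\pi=\sum_{\sigma\ge\pi}m_\sigma$, the sum over set partitions $\sigma$ of $[n]$ coarser than or equal to $\pi$. For $A=\{(V,E_1),\dots,(V,E_k)\}\subseteq\mathcal{E}$, $\pi(A)$ is the partition of $V$ into connected components of the graph $(V,\bigcup_{i}E_i)$ (for $A=\emptyset$ this is the partition into singletons). *)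

theory Defs
  imports Main "HOL-Library.Multiset" "HOL-Library.Uprod" "HOL-Library.FuncSet"
    "HOL-Library.Disjoint_Sets"
begin

text \<open>A graph on [n] is a multiset of unordered pairs
  (loops allowed). A plurigraph is given by an indexed family (list) of graphs, so that
  equal graphs occurring several times count as distinct elements. Noncommutative series
  homogeneous of degree n are represented by their coefficient functions on words
  (lists of positive integers).\<close>

type_synonym graph = "nat uprod multiset"
type_synonym plurigraph = "graph list"

definition plurigraph_on :: "nat \<Rightarrow> plurigraph \<Rightarrow> bool" where
  "plurigraph_on n \<E> \<longleftrightarrow>
     (\<forall>E\<in>set \<E>. E \<noteq> {#} \<and> (\<forall>e\<in>#E. set_uprod e \<subseteq> {1..n}))"

definition proper :: "plurigraph \<Rightarrow> (nat \<Rightarrow> nat) \<Rightarrow> bool" where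
  "proper \<E> f \<longleftrightarrow> (\<forall>E\<in>set \<E>. \<exists>u v. Upair u v \<in># E \<and> f u \<noteq> f v)"

definition Y :: "nat \<Rightarrow> plurigraph \<Rightarrow> nat list \<Rightarrow> 'a::field_char_0" where
  "Y n \<E> w = of_nat (card {f \<in> {1..n} \<rightarrow>\<^sub>E {1..}. proper \<E> f \<and> map f [1..<n+1] = w})"

definition coarser :: "nat set set \<Rightarrow> nat set set \<Rightarrow> bool" where
  "coarser \<sigma> \<pi> \<longleftrightarrow> (\<forall>B\<in>\<pi>. \<exists>C\<in>\<sigma>. B \<subseteq> C)"

definition m :: "nat \<Rightarrow> nat set set \<Rightarrow> nat list \<Rightarrow> 'a::field_char_0" where
  "m n \<pi> w = (if length w = n \<and> (\<forall>j\<in>{1..n}. w!(j-1) \<ge> 1) \<and>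
        (\<forall>j\<in>{1..n}. \<forall>k\<in>{1..n}. w!(j-1) = w!(k-1) \<longleftrightarrow> (\<exists>B\<in>\<pi>. j \<in> B \<and> k \<in> B))
      then 1 else 0)"

definition p :: "nat \<Rightarrow> nat set set \<Rightarrow> nat list \<Rightarrow> 'a::field_char_0" where
  "p n \<pi> w = (\<Sum>\<sigma>\<in>{\<sigma>. partition_on {1..n} \<sigma> \<and> coarser \<sigma> \<pi>}. m n \<sigma> w)"

text \<open>Edges (as ordered pairs, both orientations) of the union of the graphs indexed by A.\<close>
definition union_edges :: "plurigraph \<Rightarrow> nat set \<Rightarrow> (nat \<times> nat) set" where
  "union_edges \<E> A = {(u, v). \<exists>i\<in>A. Upair u v \<in># \<E> ! i}"

definition comp_partition :: "nat \<Rightarrow> plurigraph \<Rightarrow> nat set \<Rightarrow> nat set set" where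
  "comp_partition n \<E> A = {1..n} // ((union_edges \<E> A)\<^sup>*)"

end

theory Submission
  imports Defs
begin

text \<open>Fix a word \<open>w\<close> and read it as the coloring \<open>j \<mapsto> w\<^sub>j\<close> of \<open>[n]\<close>. Its coefficient in
  \<open>Y\<^sub>\<G>\<close> is 1 iff this coloring is proper. Among all set partitions, \<open>m\<^sub>\<sigma>\<close> has coefficient 1
  at \<open>w\<close> only for the partition \<open>\<sigma>\<^sub>w\<close> into level sets of the coloring, so the coefficient
  of \<open>p\<^bsub>\<pi>(A)\<^esub>\<close> is 1 iff \<open>\<sigma>\<^sub>w\<close> is coarser than the component partition of \<open>A\<close>, i.e. iff
  every graph in \<open>A\<close> is monochromatic. The alternating sum over \<open>A\<close> is then inclusion-exclusion:
  it is 1 iff no graph of \<open>\<E>\<close> is monochromatic, i.e. iff the coloring is proper.\<close>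

lemma sum_Pow_neg_one_power_card:
  assumes "finite S"
  shows "(\<Sum>T\<in>Pow S. (-1) ^ card T :: 'a::ring_1) = (if S = {} then 1 else 0)"
proof (cases "S = {}")
  case False
  then have "card {T. T \<subseteq> S \<and> {} \<subseteq> T \<and> even (card T)} = card {T. T \<subseteq> S \<and> {} \<subseteq> T \<and> odd (card T)}"
    using card_subsupersets_even_odd[OF assms] by blast
  then have "(\<Sum>T\<in>Pow S. (-1) ^ card T :: 'a) = 0"
    by (intro sum_alternating_cancels) (auto simp: assms Pow_def)
  then show ?thesis using False by simp
qed simp

lemma sum_Pow_neg_one_power_card_if_all:
  assumes "finite I"
  shows "(\<Sum>A\<in>Pow I. (-1) ^ card A * (if \<forall>i\<in>A. P i then 1 else 0 :: 'a::ring_1))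
         = (if \<forall>i\<in>I. \<not> P i then 1 else 0)"
proof -
  have "Pow {i\<in>I. P i} = {A\<in>Pow I. \<forall>i\<in>A. P i}" by auto
  then have "(\<Sum>A\<in>Pow I. (-1) ^ card A * (if \<forall>i\<in>A. P i then 1 else 0 :: 'a))
      = (\<Sum>A\<in>Pow {i\<in>I. P i}. (-1) ^ card A)"
    using sum.inter_filter[of "Pow I" "\<lambda>A. (-1) ^ card A :: 'a"] assms
    by (simp add: if_distrib cong: if_cong)
  also have "\<dots> = (if \<forall>i\<in>I. \<not> P i then 1 else 0)"
    using assms by (simp add: sum_Pow_neg_one_power_card)
  finally show ?thesis .
qed

definition same_color_on :: "'v set \<Rightarrow> ('v \<Rightarrow> 'c) \<Rightarrow> ('v \<times> 'v) set" where
  "same_color_on X f = {(u, v) \<in> X \<times> X. f u = f v}"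

lemma equiv_same_color_on: "equiv X (same_color_on X f)"
  unfolding same_color_on_def equiv_def refl_on_def sym_def trans_def by auto

lemma partition_on_eq_quotient_same_color_iff:
  assumes "partition_on X \<sigma>"
  shows "\<sigma> = X // same_color_on X f \<longleftrightarrow>
    (\<forall>u\<in>X. \<forall>v\<in>X. f u = f v \<longleftrightarrow> (\<exists>B\<in>\<sigma>. u \<in> B \<and> v \<in> B))"
proof
  assume "\<sigma> = X // same_color_on X f"
  then show "\<forall>u\<in>X. \<forall>v\<in>X. f u = f v \<longleftrightarrow> (\<exists>B\<in>\<sigma>. u \<in> B \<and> v \<in> B)"
    unfolding same_color_on_def quotient_def by auto
next
  assume same: "\<forall>u\<in>X. \<forall>v\<in>X. f u = f v \<longleftrightarrow> (\<exists>B\<in>\<sigma>. u \<in> B \<and> v \<in> B)"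
  have "\<Union>\<sigma> = X" using assms by (simp add: partition_on_def)
  then have "{(u, v). \<exists>B\<in>\<sigma>. u \<in> B \<and> v \<in> B} = same_color_on X f"
    using same unfolding same_color_on_def by blast
  then show "\<sigma> = X // same_color_on X f"
    using partition_on_eq_quotient[OF assms] by simp
qed

lemma coarser_quotient_same_color_iff:
  assumes "R \<subseteq> X \<times> X"
  shows "coarser (X // same_color_on X f) (X // R\<^sup>*) \<longleftrightarrow> (\<forall>(u, v)\<in>R. f u = f v)"
proof
  assume coarse: "coarser (X // same_color_on X f) (X // R\<^sup>*)"
  show "\<forall>(u, v)\<in>R. f u = f v"
  proof clarify
    fix u v assume "(u, v) \<in> R"
    then have "u \<in> X" "{u, v} \<subseteq> R\<^sup>* `` {u}" using assms by auto
    then obtain C where "C \<in> X // same_color_on X f" "{u, v} \<subseteq> C"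
      using coarse unfolding coarser_def by (meson order.trans quotientI)
    then show "f u = f v" unfolding quotient_def same_color_on_def by auto
  qed
next
  assume mono: "\<forall>(u, v)\<in>R. f u = f v"
  have path: "v \<in> X \<and> f u = f v" if "(u, v) \<in> R\<^sup>*" "u \<in> X" for u v
    using that by (induction rule: rtrancl_induct) (use assms mono in auto)
  show "coarser (X // same_color_on X f) (X // R\<^sup>*)"
    unfolding coarser_def
  proof
    fix B assume "B \<in> X // R\<^sup>*"
    then obtain u where "u \<in> X" "B = R\<^sup>* `` {u}" by (auto simp: quotient_def)
    then have "B \<subseteq> same_color_on X f `` {u}" using path by (auto simp: same_color_on_def)
    moreover have "same_color_on X f `` {u} \<in> X // same_color_on X f"
      using \<open>u \<in> X\<close> by (rule quotientI)
    ultimately show "\<exists>C\<in>X // same_color_on X f. B \<subseteq> C" by blast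
  qed
qed

definition coloring_of_word :: "nat list \<Rightarrow> nat \<Rightarrow> nat" where
  "coloring_of_word w j = w ! (j - 1)"

definition positive_word :: "nat \<Rightarrow> nat list \<Rightarrow> bool" where
  "positive_word n w \<longleftrightarrow> length w = n \<and> 0 \<notin> set w"

definition monochromatic :: "(nat \<Rightarrow> 'c) \<Rightarrow> graph \<Rightarrow> bool" where
  "monochromatic f E \<longleftrightarrow> (\<forall>u v. Upair u v \<in># E \<longrightarrow> f u = f v)"

lemma map_upt_eq_iff_coloring_of_word:
  "map f [1..<n+1] = w \<longleftrightarrow> length w = n \<and> (\<forall>j\<in>{1..n}. f j = coloring_of_word w j)"
proof
  assume "map f [1..<n+1] = w"
  then show "length w = n \<and> (\<forall>j\<in>{1..n}. f j = coloring_of_word w j)"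
    by (auto simp: coloring_of_word_def simp del: upt_Suc)
next
  assume "length w = n \<and> (\<forall>j\<in>{1..n}. f j = coloring_of_word w j)"
  then show "map f [1..<n+1] = w"
    by (intro nth_equalityI) (auto simp: coloring_of_word_def simp del: upt_Suc)
qed

lemma positive_word_iff_coloring_of_word:
  "positive_word n w \<longleftrightarrow> length w = n \<and> (\<forall>j\<in>{1..n}. 1 \<le> coloring_of_word w j)"
proof -
  have "(\<forall>j\<in>{1..n}. 1 \<le> coloring_of_word w j) \<longleftrightarrow> (\<forall>i<n. w ! i \<noteq> 0)"
  proof (intro iffI allI impI ballI)
    fix i assume "\<forall>j\<in>{1..n}. 1 \<le> coloring_of_word w j" "i < n"
    then have "1 \<le> coloring_of_word w (Suc i)" by simp
    then show "w ! i \<noteq> 0" by (simp add: coloring_of_word_def)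
  next
    fix j assume "\<forall>i<n. w ! i \<noteq> 0" "j \<in> {1..n}"
    then have "w ! (j - 1) \<noteq> 0" by auto
    then show "1 \<le> coloring_of_word w j" by (simp add: coloring_of_word_def)
  qed
  then show ?thesis
    unfolding positive_word_def in_set_conv_nth by auto
qed

lemma plurigraph_on_edge:
  assumes "plurigraph_on n \<E>" "E \<in> set \<E>" "Upair u v \<in># E"
  shows "u \<in> {1..n}" "v \<in> {1..n}"
  using assms unfolding plurigraph_on_def by fastforce+

lemma proper_cong:
  assumes "plurigraph_on n \<E>" "\<forall>j\<in>{1..n}. f j = g j"
  shows "proper \<E> f \<longleftrightarrow> proper \<E> g"
  using assms plurigraph_on_edge unfolding proper_def by metis

lemma proper_iff_nth_not_monochromatic:
  "proper \<E> f \<longleftrightarrow> (\<forall>i\<in>{..<length \<E>}. \<not> monochromatic f (\<E> ! i))"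
  unfolding proper_def monochromatic_def by (auto simp: all_set_conv_all_nth)

lemma Y_eq_if:
  assumes "plurigraph_on n \<E>"
  shows "Y n \<E> w = (if positive_word n w \<and> proper \<E> (coloring_of_word w) then 1 else 0)"
proof -
  let ?S = "{f \<in> {1..n} \<rightarrow>\<^sub>E {1..}. proper \<E> f \<and> map f [1..<n+1] = w}"
  let ?g = "restrict (coloring_of_word w) {1..n}"
  have "f \<in> ?S \<longleftrightarrow> f = ?g \<and> positive_word n w \<and> proper \<E> (coloring_of_word w)" for f
  proof
    assume f: "f \<in> ?S"
    then have "map f [1..<n+1] = w" by blast
    then have agree: "\<forall>j\<in>{1..n}. f j = coloring_of_word w j" and "length w = n"
      unfolding map_upt_eq_iff_coloring_of_word by auto
    moreover have "f = ?g"
      using f agree by (intro extensionalityI[of _ "{1..n}"]) (auto simp: PiE_iff)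
    moreover have "proper \<E> (coloring_of_word w)"
      using f proper_cong[OF assms agree] by blast
    ultimately show "f = ?g \<and> positive_word n w \<and> proper \<E> (coloring_of_word w)"
      using f agree by (auto simp: positive_word_iff_coloring_of_word PiE_iff)
  next
    assume f: "f = ?g \<and> positive_word n w \<and> proper \<E> (coloring_of_word w)"
    then have "proper \<E> f"
      using proper_cong[OF assms, of f "coloring_of_word w"] by simp
    moreover have "map f [1..<n+1] = w"
      using f by (simp only: map_upt_eq_iff_coloring_of_word positive_word_def) simp
    ultimately show "f \<in> ?S"
      using f by (auto simp: positive_word_iff_coloring_of_word)
  qed
  then have "?S = (if positive_word n w \<and> proper \<E> (coloring_of_word w) then {?g} else {})"
    by auto
  then show ?thesis unfolding Y_def by simp
qed

lemma m_eq_if: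
  assumes "partition_on {1..n} \<sigma>"
  shows "m n \<sigma> w = (if positive_word n w \<and>
    \<sigma> = {1..n} // same_color_on {1..n} (coloring_of_word w) then 1 else 0)"
  unfolding m_def partition_on_eq_quotient_same_color_iff[OF assms]
    positive_word_iff_coloring_of_word coloring_of_word_def
  by simp

lemma p_eq_if:
  "p n \<pi> w = (if positive_word n w \<and>
    coarser ({1..n} // same_color_on {1..n} (coloring_of_word w)) \<pi> then 1 else 0)"
proof -
  let ?\<sigma> = "{1..n} // same_color_on {1..n} (coloring_of_word w)"
  let ?S = "{\<sigma>. partition_on {1..n} \<sigma> \<and> coarser \<sigma> \<pi>}"
  have "finite ?S"
    by (rule finite_subset[OF _ finitely_many_partition_on[of "{1..n}"]]) auto
  have "partition_on {1..n} ?\<sigma>"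
    by (rule partition_on_quotient[OF equiv_same_color_on])
  have "p n \<pi> w = (\<Sum>\<sigma>\<in>?S. if \<sigma> = ?\<sigma> then (if positive_word n w then 1 else 0) else 0)"
    unfolding p_def by (rule sum.cong) (auto simp: m_eq_if)
  also have "\<dots> = (if ?\<sigma> \<in> ?S then (if positive_word n w then 1 else 0) else 0)"
    using \<open>finite ?S\<close> by (rule sum.delta)
  finally show ?thesis
    using \<open>partition_on {1..n} ?\<sigma>\<close> by auto
qed

lemma coarser_comp_partition_iff:
  assumes "plurigraph_on n \<E>" "A \<subseteq> {..<length \<E>}"
  shows "coarser ({1..n} // same_color_on {1..n} f) (comp_partition n \<E> A) \<longleftrightarrow>
    (\<forall>i\<in>A. monochromatic f (\<E> ! i))"
proof -
  have "union_edges \<E> A \<subseteq> {1..n} \<times> {1..n}"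
    using assms plurigraph_on_edge unfolding union_edges_def by (blast intro: nth_mem)
  then have "coarser ({1..n} // same_color_on {1..n} f) (comp_partition n \<E> A) \<longleftrightarrow>
      (\<forall>(u, v)\<in>union_edges \<E> A. f u = f v)"
    unfolding comp_partition_def by (rule coarser_quotient_same_color_iff)
  then show ?thesis by (auto simp: union_edges_def monochromatic_def)
qed

theorem theorem2p6:
  fixes n :: nat and \<E> :: plurigraph
  assumes "plurigraph_on n \<E>"
  shows "(Y n \<E> :: nat list \<Rightarrow> 'a::field_char_0) =
    (\<lambda>w. \<Sum>A\<in>Pow {..<length \<E>}. (-1) ^ card A * p n (comp_partition n \<E> A) w)"
proof
  fix w :: "nat list"
  let ?f = "coloring_of_word w"
  let ?pos = "if positive_word n w then 1 else 0 :: 'a"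
  have p_comp_partition: "p n (comp_partition n \<E> A) w =
      ?pos * (if \<forall>i\<in>A. monochromatic ?f (\<E> ! i) then 1 else 0)"
    if "A \<in> Pow {..<length \<E>}" for A
    using coarser_comp_partition_iff[OF assms, of A ?f] that unfolding p_eq_if by simp
  have "Y n \<E> w = ?pos * (if proper \<E> ?f then 1 else 0)"
    by (simp add: Y_eq_if[OF assms])
  also have "\<dots> = ?pos * (\<Sum>A\<in>Pow {..<length \<E>}. (-1) ^ card A *
      (if \<forall>i\<in>A. monochromatic ?f (\<E> ! i) then 1 else 0))"
    by (simp add: sum_Pow_neg_one_power_card_if_all proper_iff_nth_not_monochromatic)
  also have "\<dots> = (\<Sum>A\<in>Pow {..<length \<E>}. (-1) ^ card A * p n (comp_partition n \<E> A) w)"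
    by (simp add: p_comp_partition sum_distrib_left mult.left_commute)
  finally show "Y n \<E> w = \<dots>" .
qed

end
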